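(* Let $q$ be an odd prime power and $h=(h_1,\dots,h_k)$ a $k$-tuple of pairwise distinct polynomials in $\mathbb{F}_q[T]$. For every monic irreducible $P$, $\delta_{q,h}(P)=0$ if and only if $\mathcal{A}_{q,h}(P^\nu)=\emptyset$ for some $\nu\ge1$. Moreover, the product $\mathfrak{S}_{q,h}$ converges, and $\mathfrak{S}_{q,h}=0$ if and only if there exists a monic irreducible $P$ with $\mathcal{A}_{q,h}(P^\nu)=\emptyset$ for some $\nu\ge1$.
   Context: $|P|=q^{\deg P}$. $\mathcal{A}_q(P^\nu)=\{A^2+TB^2\bmod P^\nu:A,B\in\mathbb{F}_q[T]\}$, $\mathcal{A}_{q,h}(P^\nu)=\{f\bmod P^\nu:f+h_i\in\mathcal{A}_q(P^\nu)\ \forall i\}$, $\delta_{q,h}(P)=\lim_{\nu\to\infty}|P|^{-\nu}\#\mathcal{A}_{q,h}(P^\nu)$, $\delta_{q,0}(P)$ the same for the $1$-tuple $(0)$, and $\mathfrak{S}_{q,h}=\prod_P\delta_{q,h}(P)/\delta_{q,0}(P)^k$ over all monic irreducible $P$. *)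

theory Defs
  imports "HOL-Analysis.Analysis" "HOL-Computational_Algebra.Computational_Algebra"
begin

text \<open>Throughout, the finite field F_q is modelled by a type 'a of class field and finite;
  q = CARD('a). The variable T is the polynomial [:0, 1:]. Residue classes modulo a nonzero
  polynomial M are represented by their canonical representatives f with f mod M = f.\<close>

definition monic_irred :: "'a::field poly \<Rightarrow> bool" where
  "monic_irred P \<longleftrightarrow> lead_coeff P = 1 \<and> irreducible P"

definition sq_form_set :: "'a::field poly \<Rightarrow> 'a poly set" where
  "sq_form_set M = {(A\<^sup>2 + [:0, 1:] * B\<^sup>2) mod M | A B. True}"

definition sq_form_tuple_set :: "'a::field poly list \<Rightarrow> 'a poly \<Rightarrow> 'a poly set" where
  "sq_form_tuple_set h M = {f. f mod M = f \<and> (\<forall>i<length h. (f + h ! i) mod M \<in> sq_form_set M)}"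

definition local_density :: "'a::{field,finite} poly list \<Rightarrow> 'a poly \<Rightarrow> real" where
  "local_density h P =
     lim (\<lambda>\<nu>. real (card (sq_form_tuple_set h (P ^ \<nu>))) / real (CARD('a)) ^ (degree P * \<nu>))"

definition local_factor :: "'a::{field,finite} poly list \<Rightarrow> 'a poly \<Rightarrow> real" where
  "local_factor h P = local_density h P / local_density [0] P ^ length h"

text \<open>The product over all monic irreducible P, ordered by degree: the n-th factor of the
  infinite product is the (finite) product of the local factors over the monic irreducible P
  of degree n.\<close>
definition degree_factor :: "'a::{field,finite} poly list \<Rightarrow> nat \<Rightarrow> real" where
  "degree_factor h n = (\<Prod>P \<in> {P. monic_irred P \<and> degree P = n}. local_factor h P)"

definition singular_series :: "'a::{field,finite} poly list \<Rightarrow> real" where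
  "singular_series h = prodinf (degree_factor h)"

end

theory Submission
  imports Defs "HOL-Library.Z2" "HOL-Library.Disjoint_Sets"
begin

text \<open>
  Membership in \<open>A\<^sub>q(P\<^sup>\<nu>)\<close> is decided at a finite level: by Hensel's lemma (here \<open>q\<close> odd is
  used), a residue that is \<open>A\<^sup>2 + T B\<^sup>2\<close> modulo \<open>P\<^sup>n\<close> without being divisible by \<open>P\<^sup>n\<close> is of
  this form modulo every power of \<open>P\<close>. So if \<open>A\<^sub>q\<^sub>,\<^sub>h(P\<^sup>\<nu>)\<close> is nonempty for \<open>\<nu>\<close> beyond the
  degrees of the differences \<open>h\<^sub>i - h\<^sub>j\<close>, a whole residue class modulo a fixed \<open>P\<^sup>L\<close> lies in
  every \<open>A\<^sub>q\<^sub>,\<^sub>h(P\<^sup>\<mu>)\<close>, and \<open>\<delta>\<^sub>q\<^sub>,\<^sub>h(P) \<ge> |P|\<^sup>-\<^sup>L\<close>; an empty \<open>A\<^sub>q\<^sub>,\<^sub>h(P\<^sup>\<nu>)\<close> stays empty.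

  If \<open>P \<noteq> T\<close> divides no \<open>h\<^sub>i - h\<^sub>j\<close>, every unit is \<open>A\<^sup>2 + T B\<^sup>2\<close> modulo \<open>P\<^sup>\<nu>\<close> (modulo \<open>P\<close>,
  the values of \<open>A\<^sup>2\<close> and of \<open>u - T B\<^sup>2\<close> each cover more than half of the odd number \<open>|P|\<close> of
  residues). The residues excluded by the \<open>h\<^sub>i\<close> are then \<open>k\<close> disjoint translates of the
  non-members of \<open>A\<^sub>q(P\<^sup>\<nu>)\<close>, all multiples of \<open>P\<close>, whence
  \<open>\<delta>\<^sub>q\<^sub>,\<^sub>h(P) = 1 - k (1 - \<delta>\<^sub>q\<^sub>,\<^sub>0(P))\<close> with \<open>1 - \<delta>\<^sub>q\<^sub>,\<^sub>0(P) \<le> |P|\<^sup>-\<^sup>1\<close>, and the local factor is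
  \<open>1 + O(k\<^sup>2 |P|\<^sup>-\<^sup>2)\<close>. As there are at most \<open>q\<^sup>n\<^sup>+\<^sup>1\<close> monic irreducibles of degree \<open>n\<close>, the
  product grouped by degree converges absolutely, and it vanishes exactly when a factor does.
\<close>

lemma two_neq_zero_if_odd_card:
  assumes "odd CARD('a::{field,finite})"
  shows "(2::'a) \<noteq> 0"
proof
  assume two: "(2::'a) = 0"
  \<comment> \<open>Then \<open>x \<mapsto> x + 1\<close> is a fixed-point-free involution, so \<open>CARD('a)\<close> vanishes in \<open>\<int>/2\<close>.\<close>
  have "(\<Sum>x\<in>(UNIV::'a set). (1::bit)) = 0"
    by (rule sum_involution_eq_0[where h="\<lambda>x. x + 1"])
      (use two in \<open>auto simp: add.assoc one_add_one\<close>)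
  then have "(of_nat CARD('a) :: bit) = 0" by simp
  then show False using assms by (metis even_of_nat even_zero)
qed

lemma two_le_card_field: "2 \<le> CARD('a::{field,finite})"
proof -
  have "card {0::'a, 1} \<le> CARD('a)" by (rule card_mono) auto
  then show ?thesis by simp
qed

lemma prime_elem_power_dvd_mult_cancel:
  fixes P :: "'a::idom"
  assumes "prime_elem P" "\<not> P dvd c" "P ^ n dvd a * c"
  shows "P ^ n dvd a"
  using assms(3)
proof (induction n arbitrary: a)
  case (Suc n)
  have "P dvd P ^ Suc n" by (rule dvd_power) simp
  then have "P dvd a * c" using Suc.prems by (rule dvd_trans)
  then have "P dvd a" using assms(1,2) prime_elem_dvd_mult_iff by blast
  then obtain b where a: "a = P * b" by (elim dvdE)
  have "P \<noteq> 0" using assms(1) by auto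
  moreover have "P * P ^ n dvd P * (b * c)" using Suc.prems a by (simp add: mult.assoc)
  ultimately have "P ^ n dvd b * c" by simp
  then have "P ^ n dvd b" by (rule Suc.IH)
  then show ?case using a by simp
qed simp

lemma monic_irredD:
  assumes "monic_irred (P::'a::field poly)"
  shows "P \<noteq> 0" "degree P > 0" "prime_elem P"
proof -
  show P0: "P \<noteq> 0" using assms by (auto simp: monic_irred_def)
  have "\<not> is_unit P" using assms by (auto simp: monic_irred_def irreducible_def)
  then show "degree P > 0" using is_unit_iff_degree[OF P0] by auto
  show "prime_elem P" using assms by (simp add: monic_irred_def field_poly_irreducible_imp_prime)
qed

lemma degree_div_less:
  fixes f M :: "'a::field poly"
  assumes M0: "M \<noteq> 0" and f: "f = 0 \<or> degree f < degree M + e"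
  shows "f div M = 0 \<or> degree (f div M) < e"
proof (cases "f div M = 0")
  case False
  have dq: "degree (f div M * M) = degree (f div M) + degree M"
    using False M0 by (simp add: degree_mult_eq)
  have fe: "f = f div M * M + f mod M" by simp
  have "degree f = degree (f div M * M)"
  proof (cases "f mod M = 0")
    case True
    then show ?thesis using fe by (metis add.right_neutral)
  next
    case False
    then have "degree (f mod M) < degree (f div M * M)"
      using degree_mod_less[OF M0, of f] dq by simp
    then show ?thesis using fe degree_add_eq_left by metis
  qed
  moreover have "f \<noteq> 0" using False by auto
  ultimately show ?thesis using f dq by simp
qed simp

lemma not_dvd_if_degree_less:
  fixes P x :: "'a::field poly"
  assumes "x \<noteq> 0" "degree x < degree P"
  shows "\<not> P dvd x"
proof
  assume "P dvd x"
  then have "degree P \<le> degree x" using assms(1) by (rule dvd_imp_degree_le)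
  with assms(2) show False by simp
qed

definition polys_degree_less :: "nat \<Rightarrow> 'a::zero poly set" where
  "polys_degree_less n = {p. \<forall>i\<ge>n. coeff p i = 0}"

lemma mem_polys_degree_less: "p \<in> polys_degree_less n \<longleftrightarrow> p = 0 \<or> degree p < n"
proof
  assume "p \<in> polys_degree_less n"
  then have "coeff p (degree p) = 0" if "\<not> degree p < n"
    using that by (simp add: polys_degree_less_def)
  then show "p = 0 \<or> degree p < n" by auto
qed (auto simp: polys_degree_less_def coeff_eq_0)

lemma polys_degree_less_Suc:
  "polys_degree_less (Suc n) = (\<lambda>(a, p). pCons a p) ` (UNIV \<times> polys_degree_less n)"
proof (intro equalityI subsetI)
  fix p :: "'a poly"
  assume p: "p \<in> polys_degree_less (Suc n)"
  obtain a q where pq: "p = pCons a q" by (cases p)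
  have "coeff q i = 0" if "n \<le> i" for i
  proof -
    have "coeff p (Suc i) = 0" using p that by (simp add: polys_degree_less_def)
    then show ?thesis by (simp add: pq)
  qed
  then have "q \<in> polys_degree_less n" by (simp add: polys_degree_less_def)
  then show "p \<in> (\<lambda>(a, p). pCons a p) ` (UNIV \<times> polys_degree_less n)" using pq by auto
next
  fix p :: "'a poly"
  assume "p \<in> (\<lambda>(a, p). pCons a p) ` (UNIV \<times> polys_degree_less n)"
  then obtain a q where "p = pCons a q" "q \<in> polys_degree_less n" by auto
  then show "p \<in> polys_degree_less (Suc n)"
    by (auto simp: polys_degree_less_def coeff_pCons split: nat.split)
qed

lemma card_polys_degree_less:
  "finite (polys_degree_less n :: 'a::{zero,finite} poly set)"
  "card (polys_degree_less n :: 'a poly set) = CARD('a) ^ n"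
proof (induction n)
  case 0
  have "polys_degree_less 0 = {0::'a poly}" by (auto simp: mem_polys_degree_less)
  { case 1 then show ?case by (simp add: \<open>polys_degree_less 0 = {0}\<close>) }
  { case 2 then show ?case by (simp add: \<open>polys_degree_less 0 = {0}\<close>) }
next
  case (Suc n)
  have inj: "inj_on (\<lambda>(a, p). pCons a p) (UNIV \<times> (polys_degree_less n :: 'a poly set))"
    by (auto simp: inj_on_def)
  { case 1 show ?case using Suc.IH(1) by (simp add: polys_degree_less_Suc) }
  { case 2 show ?case
      using Suc.IH card_image[OF inj] by (simp add: polys_degree_less_Suc card_cartesian_product) }
qed

definition residues :: "'a::field poly \<Rightarrow> 'a poly set" where
  "residues M = {f. f mod M = f}"

lemma mem_residues_iff:
  assumes "M \<noteq> 0"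
  shows "f \<in> residues M \<longleftrightarrow> f = 0 \<or> degree f < degree M"
proof
  assume "f \<in> residues M"
  then have e: "f mod M = f" by (simp add: residues_def)
  show "f = 0 \<or> degree f < degree M"
  proof (cases "f = 0")
    case False
    then have "f mod M \<noteq> 0" using e by simp
    then have "degree (f mod M) < degree M" using degree_mod_less[OF assms, of f] by blast
    then show ?thesis using e by simp
  qed simp
next
  assume "f = 0 \<or> degree f < degree M"
  then show "f \<in> residues M" by (auto simp: residues_def mod_poly_less)
qed

lemma residues_eq_polys_degree_less:
  assumes "M \<noteq> 0"
  shows "residues M = polys_degree_less (degree M)"
  by (auto simp: mem_residues_iff[OF assms] mem_polys_degree_less)

lemma card_residues:
  assumes "(M::'a::{field,finite} poly) \<noteq> 0"
  shows "finite (residues M)" "card (residues M) = CARD('a) ^ degree M"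
  using card_polys_degree_less by (simp_all add: residues_eq_polys_degree_less[OF assms])

lemma card_residues_power:
  assumes "(P::'a::{field,finite} poly) \<noteq> 0"
  shows "card (residues (P ^ n)) = CARD('a) ^ (degree P * n)"
  using card_residues(2)[of "P ^ n"] assms by (simp add: degree_power_eq mult.commute)

lemma exists_inverse_mod_prime_elem_power:
  fixes P :: "'a::{field,finite} poly"
  assumes "prime_elem P" "\<not> P dvd c"
  obtains s where "P ^ n dvd s * c - 1"
proof -
  let ?M = "P ^ n" and ?g = "\<lambda>x. (x * c) mod P ^ n"
  have M0: "?M \<noteq> 0" using assms(1) by auto
  have inj: "inj_on ?g (residues ?M)"
  proof (rule inj_onI)
    fix x y assume x: "x \<in> residues ?M" and y: "y \<in> residues ?M" and "?g x = ?g y"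
    then have "?M dvd x * c - y * c" by (simp add: mod_eq_dvd_iff)
    then have "?M dvd (x - y) * c" by (simp add: algebra_simps)
    then have "?M dvd x - y" by (rule prime_elem_power_dvd_mult_cancel[OF assms])
    then have "x mod ?M = y mod ?M" by (simp add: mod_eq_dvd_iff)
    with x y show "x = y" by (simp add: residues_def)
  qed
  have sub: "?g ` residues ?M \<subseteq> residues ?M" by (auto simp: residues_def)
  have surj: "?g ` residues ?M = residues ?M"
    by (rule endo_inj_surj[OF card_residues(1)[OF M0] sub inj])
  have "1 mod ?M \<in> ?g ` residues ?M" unfolding surj by (simp add: residues_def)
  then obtain s where "1 mod ?M = (s * c) mod ?M" by blast
  then have "?M dvd 1 - s * c" by (simp add: mod_eq_dvd_iff)
  then have "?M dvd - (1 - s * c)" by (simp only: dvd_minus_iff)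
  then have "?M dvd s * c - 1" by (simp only: minus_diff_eq)
  then show ?thesis by (rule that)
qed

text \<open>The constant polynomial \<open>T\<close>, kept opaque so that the simplifier does not rewrite
  \<open>T * B\<^sup>2\<close> into a \<open>pCons\<close> term.\<close>
definition T_poly :: "'a::comm_ring_1 poly" where
  "T_poly = [:0, 1:]"

lemma degree_T_poly [simp]: "degree (T_poly :: 'a::field poly) = 1"
  and T_poly_neq_0 [simp]: "(T_poly :: 'a::field poly) \<noteq> 0"
  by (simp_all add: T_poly_def)

lemma mod_in_sq_form_set_iff:
  "x mod M \<in> sq_form_set M \<longleftrightarrow> (\<exists>A B. M dvd x - (A\<^sup>2 + T_poly * B\<^sup>2))"
  by (simp add: sq_form_set_def mod_eq_dvd_iff T_poly_def)

lemma mod_in_sq_form_set_dvd: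
  assumes "M dvd M'" "x mod M' \<in> sq_form_set M'"
  shows "x mod M \<in> sq_form_set M"
proof -
  obtain A B where "M' dvd x - (A\<^sup>2 + T_poly * B\<^sup>2)"
    using assms(2) by (auto simp: mod_in_sq_form_set_iff)
  then have "M dvd x - (A\<^sup>2 + T_poly * B\<^sup>2)" using assms(1) by (rule dvd_trans[rotated])
  then show ?thesis by (auto simp: mod_in_sq_form_set_iff)
qed

lemma sq_form_tuple_set_subset_residues: "sq_form_tuple_set h M \<subseteq> residues M"
  by (auto simp: sq_form_tuple_set_def residues_def)

lemma finite_sq_form_tuple_set:
  "(M::'a::{field,finite} poly) \<noteq> 0 \<Longrightarrow> finite (sq_form_tuple_set h M)"
  by (rule finite_subset[OF sq_form_tuple_set_subset_residues card_residues(1)])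

lemma mod_in_sq_form_tuple_set:
  assumes "M dvd M'" "f \<in> sq_form_tuple_set h M'"
  shows "f mod M \<in> sq_form_tuple_set h M"
proof -
  have "(f + h ! i) mod M \<in> sq_form_set M" if "i < length h" for i
    using assms that by (intro mod_in_sq_form_set_dvd[OF assms(1)]) (auto simp: sq_form_tuple_set_def)
  then show ?thesis by (simp add: sq_form_tuple_set_def mod_add_left_eq)
qed

lemma sq_form_tuple_set_power_eq_empty_mono:
  assumes "sq_form_tuple_set h (P ^ \<nu>) = {}" "\<nu> \<le> \<mu>"
  shows "sq_form_tuple_set h (P ^ \<mu>) = {}"
  using mod_in_sq_form_tuple_set[OF le_imp_power_dvd[OF assms(2)]] assms(1) by blast

lemma card_sq_form_tuple_set_power_Suc_le:
  fixes P :: "'a::{field,finite} poly"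
  assumes P0: "P \<noteq> 0"
  shows "card (sq_form_tuple_set h (P ^ Suc \<nu>))
           \<le> CARD('a) ^ degree P * card (sq_form_tuple_set h (P ^ \<nu>))"
proof -
  let ?S1 = "sq_form_tuple_set h (P ^ Suc \<nu>)" and ?S0 = "sq_form_tuple_set h (P ^ \<nu>)"
  let ?split = "\<lambda>f. (f mod P ^ \<nu>, f div P ^ \<nu>)"
  have inj: "inj_on ?split ?S1"
  proof (rule inj_onI)
    fix f g assume "?split f = ?split g"
    then have "f div P ^ \<nu> * P ^ \<nu> + f mod P ^ \<nu> = g div P ^ \<nu> * P ^ \<nu> + g mod P ^ \<nu>" by simp
    then show "f = g" by (simp only: div_mult_mod_eq)
  qed
  have sub: "?split ` ?S1 \<subseteq> ?S0 \<times> residues P"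
  proof (rule image_subsetI)
    fix f assume f: "f \<in> ?S1"
    have "degree (P ^ Suc \<nu>) = degree (P ^ \<nu>) + degree P"
      by (simp only: degree_power_eq[OF P0]) simp
    moreover have "f \<in> residues (P ^ Suc \<nu>)" using f sq_form_tuple_set_subset_residues by blast
    ultimately have "f = 0 \<or> degree f < degree (P ^ \<nu>) + degree P"
      using mem_residues_iff[of "P ^ Suc \<nu>" f] P0 by simp
    then have "f div P ^ \<nu> = 0 \<or> degree (f div P ^ \<nu>) < degree P"
      using P0 by (intro degree_div_less) auto
    then have "f div P ^ \<nu> \<in> residues P" using mem_residues_iff[OF P0] by blast
    moreover have "f mod P ^ \<nu> \<in> ?S0"
      by (rule mod_in_sq_form_tuple_set[OF _ f]) (simp add: le_imp_power_dvd)
    ultimately show "?split f \<in> ?S0 \<times> residues P" by simp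
  qed
  have fin: "finite (?S0 \<times> residues P)"
    using finite_sq_form_tuple_set[of "P ^ \<nu>" h] card_residues(1)[OF P0] P0 by simp
  have "card ?S1 = card (?split ` ?S1)" using inj by (rule card_image[symmetric])
  also have "\<dots> \<le> card (?S0 \<times> residues P)" by (rule card_mono[OF fin sub])
  finally have "card ?S1 \<le> card (?S0 \<times> residues P)" .
  then show ?thesis using card_residues(2)[OF P0] by (simp add: card_cartesian_product mult.commute)
qed

definition density_ratio :: "'a::{field,finite} poly list \<Rightarrow> 'a poly \<Rightarrow> nat \<Rightarrow> real" where
  "density_ratio h P \<nu> =
     real (card (sq_form_tuple_set h (P ^ \<nu>))) / real CARD('a) ^ (degree P * \<nu>)"

lemma decseq_density_ratio:
  fixes P :: "'a::{field,finite} poly"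
  assumes "P \<noteq> 0"
  shows "decseq (density_ratio h P)"
proof (unfold decseq_Suc_iff, intro allI)
  fix \<nu>
  let ?q = "real CARD('a)" and ?d = "degree P"
  let ?c = "\<lambda>\<nu>. real (card (sq_form_tuple_set h (P ^ \<nu>)))"
  have "?c (Suc \<nu>) \<le> ?q ^ ?d * ?c \<nu>"
    using card_sq_form_tuple_set_power_Suc_le[OF assms, of h \<nu>]
    by (metis of_nat_le_iff of_nat_mult of_nat_power)
  then have "?c (Suc \<nu>) / ?q ^ (?d * Suc \<nu>) \<le> ?q ^ ?d * ?c \<nu> / ?q ^ (?d * Suc \<nu>)"
    by (intro divide_right_mono) auto
  also have "\<dots> = ?c \<nu> / ?q ^ (?d * \<nu>)" by (simp add: power_add)
  finally show "density_ratio h P (Suc \<nu>) \<le> density_ratio h P \<nu>"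
    unfolding density_ratio_def .
qed

lemma density_ratio_tendsto_local_density:
  fixes P :: "'a::{field,finite} poly"
  assumes "P \<noteq> 0"
  shows "density_ratio h P \<longlonglongrightarrow> local_density h P"
proof -
  have "0 \<le> density_ratio h P \<nu>" for \<nu> by (simp add: density_ratio_def)
  then obtain L where L: "density_ratio h P \<longlonglongrightarrow> L"
    using decseq_convergent[OF decseq_density_ratio[OF assms]] by blast
  moreover from L have "local_density h P = L"
    by (simp add: local_density_def density_ratio_def[abs_def] limI)
  ultimately show ?thesis by simp
qed

section \<open>Lifting representations by Hensel's lemma\<close>

lemma prime_elem_not_dvd_two:
  fixes P :: "'a::field poly"
  assumes "(2::'a) \<noteq> 0" "prime_elem P"
  shows "\<not> P dvd 2"
proof
  assume "P dvd 2"
  moreover have "is_unit (2::'a poly)"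
    by (subst numeral_poly) (simp add: is_unit_const_poly_iff dvd_field_iff assms(1))
  ultimately have "is_unit P" by (rule dvd_unit_imp_unit)
  with assms(2) show False by (simp add: prime_elem_not_unit)
qed

lemma exists_square_root_mod_power_if_coprime:
  fixes P :: "'a::{field,finite} poly"
  assumes two: "(2::'a) \<noteq> 0" and P: "prime_elem P"
    and "\<not> P dvd c\<^sub>0" "P dvd u - c\<^sub>0\<^sup>2"
  obtains c where "P ^ n dvd u - c\<^sup>2"
proof -
  have "\<exists>c. P ^ Suc m dvd u - c\<^sup>2 \<and> \<not> P dvd c" for m
  proof (induction m)
    case 0
    then show ?case using assms(3,4) by auto
  next
    case (Suc m)
    then obtain c where c: "P ^ Suc m dvd u - c\<^sup>2" "\<not> P dvd c" by blast
    define R where "R = P ^ m"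
    define Q where "Q = P * R"
    obtain w where w: "u - c\<^sup>2 = Q * w" using c(1) by (auto simp: Q_def R_def elim!: dvdE)
    have "\<not> P dvd 2 * c"
      using prime_elem_not_dvd_two[OF two P] c(2) P prime_elem_dvd_mult_iff by blast
    then obtain s where "P ^ 1 dvd s * (2 * c) - 1" by (rule exists_inverse_mod_prime_elem_power[OF P])
    then obtain e where e: "s * (2 * c) - 1 = P * e" by (auto elim!: dvdE)
    \<comment> \<open>Newton step: \<open>c + Q t\<close> with \<open>t = w / (2 c) mod P\<close>.\<close>
    define t where "t = s * w"
    have "u - (c + Q * t)\<^sup>2 = P * Q * (- (w * e) - R * t\<^sup>2)"
      using w e unfolding t_def Q_def by algebra
    then have "P ^ Suc (Suc m) dvd u - (c + Q * t)\<^sup>2" by (simp add: Q_def R_def)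
    moreover have "\<not> P dvd c + Q * t"
    proof
      assume "P dvd c + Q * t"
      moreover have "P dvd Q * t" by (simp add: Q_def)
      ultimately have "P dvd (c + Q * t) - Q * t" by (rule dvd_diff)
      with c(2) show False by simp
    qed
    ultimately show ?case by blast
  qed
  then obtain c where "P ^ Suc n dvd u - c\<^sup>2" by blast
  moreover have "P ^ n dvd P ^ Suc n" by (rule le_imp_power_dvd) simp
  ultimately show ?thesis using that dvd_trans by blast
qed

lemma exists_power_times_coprime:
  fixes P :: "'a::field poly"
  assumes "degree P > 0" "C \<noteq> 0"
  obtains a C' where "C = P ^ a * C'" "\<not> P dvd C'"
  using assms(2)
proof (induction "degree C" arbitrary: C thesis rule: less_induct)
  case less
  show ?case
  proof (cases "P dvd C")
    case False
    then show ?thesis using less.prems(1)[of 0 C] by simp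
  next
    case True
    then obtain D where C: "C = P * D" by (elim dvdE)
    with less.prems(2) assms(1) have "D \<noteq> 0" "degree D < degree C"
      by (auto simp: degree_mult_eq)
    then obtain a C' where "D = P ^ a * C'" "\<not> P dvd C'" using less.hyps by metis
    then show ?thesis using less.prems(1)[of "Suc a" C'] C by (simp add: mult.assoc)
  qed
qed

lemma exists_square_root_mod_power:
  fixes P :: "'a::{field,finite} poly"
  assumes two: "(2::'a) \<noteq> 0" and P: "prime_elem P" "degree P > 0"
    and y: "P ^ n dvd y - C\<^sub>0\<^sup>2" and nd: "\<not> P ^ n dvd C\<^sub>0\<^sup>2"
  obtains C where "P ^ \<mu> dvd y - C\<^sup>2"
proof -
  have "C\<^sub>0 \<noteq> 0" using nd by auto
  then obtain a C' where C: "C\<^sub>0 = P ^ a * C'" "\<not> P dvd C'"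
    using exists_power_times_coprime[OF P(2)] by metis
  \<comment> \<open>Since \<open>P\<^sup>n \<nmid> C\<^sub>0\<^sup>2\<close>, we have \<open>2a < n\<close> and \<open>y = P\<^sup>2\<^sup>a u\<close> with \<open>u \<equiv> C'\<^sup>2 (mod P)\<close>.\<close>
  have "2 * a < n"
  proof (rule ccontr)
    assume "\<not> 2 * a < n"
    then have "P ^ n dvd P ^ (a * 2)" by (intro le_imp_power_dvd) simp
    then have "P ^ n dvd (P ^ a)\<^sup>2" by (simp add: power_mult)
    then have "P ^ n dvd C\<^sub>0\<^sup>2" using C(1) dvd_mult2 by (simp add: power_mult_distrib)
    with nd show False ..
  qed
  then obtain e where "n = Suc (2 * a + e)" using less_imp_Suc_add by blast
  then have n: "P ^ n = (P ^ a)\<^sup>2 * P ^ Suc e" by (simp add: power_add power_even_eq[symmetric])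
  obtain k where k: "y - C\<^sub>0\<^sup>2 = P ^ n * k" using y by (elim dvdE)
  define u where "u = C'\<^sup>2 + P ^ Suc e * k"
  have yu: "y = (P ^ a)\<^sup>2 * u"
    using k unfolding n C(1) u_def by (simp add: algebra_simps power_mult_distrib)
  have "P dvd u - C'\<^sup>2" by (simp add: u_def)
  then obtain c where c: "P ^ \<mu> dvd u - c\<^sup>2"
    by (rule exists_square_root_mod_power_if_coprime[OF two P(1) C(2)])
  have "y - (P ^ a * c)\<^sup>2 = (P ^ a)\<^sup>2 * (u - c\<^sup>2)"
    unfolding yu by (simp add: algebra_simps power_mult_distrib)
  then have "P ^ \<mu> dvd y - (P ^ a * c)\<^sup>2" using c by simp
  then show ?thesis by (rule that)
qed

lemma prime_elem_T_poly: "prime_elem (T_poly :: 'a::field poly)"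
  unfolding T_poly_def
  by (rule field_poly_irreducible_imp_prime, rule irreducible_linear_field_poly) simp

lemma monic_irred_dvd_T_poly_imp_eq:
  fixes P :: "'a::field poly"
  assumes P: "monic_irred P" and dvd: "P dvd T_poly"
  shows "P = T_poly"
proof -
  obtain r where r: "T_poly = P * r" using dvd by (elim dvdE)
  have P0: "P \<noteq> 0" and "degree P > 0" using monic_irredD[OF P] by auto
  have r0: "r \<noteq> 0" using r by auto
  have "degree (P * r) = degree P + degree r" by (rule degree_mult_eq[OF P0 r0])
  with \<open>degree P > 0\<close> have dr: "degree r = 0" by (simp add: r[symmetric])
  have "lead_coeff (P * r) = lead_coeff P * lead_coeff r" by (rule lead_coeff_mult)
  then have "coeff r 0 = 1" using P dr by (simp add: r[symmetric] monic_irred_def T_poly_def)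
  then have "r = 1" using degree_0_id[OF dr] by (simp add: one_pCons)
  with r show ?thesis by simp
qed

lemma sq_form_lift_if_not_dvd_square:
  fixes P :: "'a::{field,finite} poly"
  assumes "(2::'a) \<noteq> 0" "prime_elem P" "degree P > 0"
    and "P ^ n dvd z - (A\<^sup>2 + T_poly * B\<^sup>2)" "\<not> P ^ n dvd A\<^sup>2"
  obtains A' B' where "P ^ \<mu> dvd z - (A'\<^sup>2 + T_poly * B'\<^sup>2)"
proof -
  have "P ^ n dvd (z - T_poly * B\<^sup>2) - A\<^sup>2"
    using assms(4) by (simp add: algebra_simps)
  then obtain C where "P ^ \<mu> dvd (z - T_poly * B\<^sup>2) - C\<^sup>2"
    using exists_square_root_mod_power[OF assms(1-3) _ assms(5)] by metis
  then have "P ^ \<mu> dvd z - (C\<^sup>2 + T_poly * B\<^sup>2)" by (simp add: algebra_simps)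
  then show ?thesis by (rule that)
qed

lemma sq_form_lift_T_poly:
  fixes z :: "'a::{field,finite} poly"
  assumes two: "(2::'a) \<noteq> 0"
    and z: "T_poly ^ n dvd z - (A\<^sup>2 + T_poly * B\<^sup>2)" and nd: "\<not> T_poly ^ n dvd T_poly * B\<^sup>2"
  obtains A' B' where "T_poly ^ \<mu> dvd z - (A'\<^sup>2 + T_poly * B'\<^sup>2)"
proof -
  obtain m where n: "n = Suc m" using nd by (cases n) auto
  have "T_poly dvd T_poly ^ n" by (simp add: n)
  then have "T_poly dvd z - (A\<^sup>2 + T_poly * B\<^sup>2)" using z by (rule dvd_trans)
  then have "T_poly dvd (z - (A\<^sup>2 + T_poly * B\<^sup>2)) + T_poly * B\<^sup>2" by (rule dvd_add) simp
  then have "T_poly dvd z - A\<^sup>2" by (simp add: algebra_simps)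
  then obtain y where y: "z - A\<^sup>2 = T_poly * y" by (elim dvdE)
  have "z - (A\<^sup>2 + T_poly * B\<^sup>2) = T_poly * (y - B\<^sup>2)" using y by (simp add: algebra_simps)
  with z have "T_poly ^ m dvd y - B\<^sup>2" by (simp add: n)
  moreover have "\<not> T_poly ^ m dvd B\<^sup>2" using nd by (simp add: n)
  ultimately obtain C where "T_poly ^ \<mu> dvd y - C\<^sup>2"
    using exists_square_root_mod_power[OF two prime_elem_T_poly] by (metis degree_T_poly zero_less_one)
  moreover have "z - (A\<^sup>2 + T_poly * C\<^sup>2) = T_poly * (y - C\<^sup>2)" using y by (simp add: algebra_simps)
  ultimately have "T_poly ^ \<mu> dvd z - (A\<^sup>2 + T_poly * C\<^sup>2)" by (simp add: dvd_mult)
  then show ?thesis by (rule that)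
qed

lemma sq_form_lift_not_dvd_T_poly:
  fixes P :: "'a::{field,finite} poly"
  assumes two: "(2::'a) \<noteq> 0" and P: "prime_elem P" "degree P > 0" and PT: "\<not> P dvd T_poly"
    and z: "P ^ n dvd z - (A\<^sup>2 + T_poly * B\<^sup>2)" and nd: "\<not> P ^ n dvd T_poly * B\<^sup>2"
  obtains A' B' where "P ^ \<mu> dvd z - (A'\<^sup>2 + T_poly * B'\<^sup>2)"
proof -
  \<comment> \<open>Multiplying by \<open>T\<close> turns \<open>T B\<^sup>2\<close> into the square \<open>(T B)\<^sup>2\<close>; then divide by \<open>T\<close> modulo \<open>P\<^sup>\<mu>\<close>.\<close>
  have "T_poly * (z - A\<^sup>2) - (T_poly * B)\<^sup>2 = T_poly * (z - (A\<^sup>2 + T_poly * B\<^sup>2))"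
    by (simp add: algebra_simps power2_eq_square)
  then have "P ^ n dvd T_poly * (z - A\<^sup>2) - (T_poly * B)\<^sup>2" using z by simp
  moreover have "\<not> P ^ n dvd (T_poly * B)\<^sup>2"
  proof
    assume "P ^ n dvd (T_poly * B)\<^sup>2"
    then have "P ^ n dvd (T_poly * B\<^sup>2) * T_poly" by (simp add: power2_eq_square algebra_simps)
    with nd show False using prime_elem_power_dvd_mult_cancel[OF P(1) PT] by blast
  qed
  ultimately obtain C where C: "P ^ \<mu> dvd T_poly * (z - A\<^sup>2) - C\<^sup>2"
    using exists_square_root_mod_power[OF two P] by metis
  obtain s where s: "P ^ \<mu> dvd s * T_poly - 1"
    by (rule exists_inverse_mod_prime_elem_power[OF P(1) PT])
  define Q where "Q = P ^ \<mu>"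
  obtain e\<^sub>1 where e\<^sub>1: "s * T_poly - 1 = Q * e\<^sub>1" using s unfolding Q_def by (elim dvdE)
  obtain e\<^sub>2 where e\<^sub>2: "T_poly * (z - A\<^sup>2) - C\<^sup>2 = Q * e\<^sub>2" using C unfolding Q_def by (elim dvdE)
  have "z - (A\<^sup>2 + T_poly * (s * C)\<^sup>2) = Q * (- (z - A\<^sup>2) * e\<^sub>1 * (s * T_poly + 1) + s\<^sup>2 * T_poly * e\<^sub>2)"
    using e\<^sub>1 e\<^sub>2 by algebra
  then have "P ^ \<mu> dvd z - (A\<^sup>2 + T_poly * (s * C)\<^sup>2)" by (simp add: Q_def)
  then show ?thesis by (rule that)
qed

lemma mod_in_sq_form_set_lift:
  fixes P :: "'a::{field,finite} poly"
  assumes two: "(2::'a) \<noteq> 0" and P: "monic_irred P"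
    and "z mod P ^ n \<in> sq_form_set (P ^ n)" and nz: "\<not> P ^ n dvd z"
  shows "z mod P ^ \<mu> \<in> sq_form_set (P ^ \<mu>)"
proof -
  have prime: "prime_elem P" and deg: "degree P > 0" using monic_irredD[OF P] by auto
  obtain A B where z: "P ^ n dvd z - (A\<^sup>2 + T_poly * B\<^sup>2)"
    using assms(3) by (auto simp: mod_in_sq_form_set_iff)
  have "\<not> P ^ n dvd A\<^sup>2 \<or> \<not> P ^ n dvd T_poly * B\<^sup>2"
  proof (rule ccontr)
    assume "\<not> ?thesis"
    then have "P ^ n dvd (z - (A\<^sup>2 + T_poly * B\<^sup>2)) + (A\<^sup>2 + T_poly * B\<^sup>2)"
      using z by (intro dvd_add) auto
    with nz show False by simp
  qed
  then consider "\<not> P ^ n dvd A\<^sup>2" | "\<not> P ^ n dvd T_poly * B\<^sup>2" "P = T_poly"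
    | "\<not> P ^ n dvd T_poly * B\<^sup>2" "\<not> P dvd T_poly"
    using monic_irred_dvd_T_poly_imp_eq[OF P] by blast
  then obtain A' B' where "P ^ \<mu> dvd z - (A'\<^sup>2 + T_poly * B'\<^sup>2)"
  proof cases
    case 1
    then show ?thesis using sq_form_lift_if_not_dvd_square[OF two prime deg z] that by blast
  next
    case 2
    then show ?thesis using sq_form_lift_T_poly[OF two] z that by blast
  next
    case 3
    then show ?thesis using sq_form_lift_not_dvd_T_poly[OF two prime deg _ z] that by blast
  qed
  then show ?thesis by (auto simp: mod_in_sq_form_set_iff)
qed

section \<open>Units are represented modulo prime powers\<close>

lemma card_residues_le_twice_card_squares:
  fixes P :: "'a::{field,finite} poly"
  assumes P: "prime_elem P"
  shows "card (residues P) \<le> 2 * card ((\<lambda>A. A\<^sup>2 mod P) ` residues P)"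
proof -
  let ?V = "residues P" and ?sq = "\<lambda>A. A\<^sup>2 mod P"
  let ?fibre = "\<lambda>x. {A \<in> ?V. ?sq A = x}"
  have P0: "P \<noteq> 0" using P by auto
  have fibre: "card (?fibre x) \<le> 2" if x: "x \<in> ?sq ` ?V" for x
  proof -
    obtain A\<^sub>0 where A\<^sub>0: "A\<^sub>0 \<in> ?V" "x = ?sq A\<^sub>0" using x by blast
    have "?fibre x \<subseteq> {A\<^sub>0, (- A\<^sub>0) mod P}"
    proof
      fix A assume "A \<in> ?fibre x"
      then have A: "A \<in> ?V" "P dvd A\<^sup>2 - A\<^sub>0\<^sup>2" using A\<^sub>0 by (auto simp: mod_eq_dvd_iff)
      have "A\<^sup>2 - A\<^sub>0\<^sup>2 = (A - A\<^sub>0) * (A - (- A\<^sub>0))" by (simp add: algebra_simps power2_eq_square)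
      with A(2) have "P dvd (A - A\<^sub>0) * (A - (- A\<^sub>0))" by simp
      then have "P dvd A - A\<^sub>0 \<or> P dvd A - (- A\<^sub>0)" by (simp only: prime_elem_dvd_mult_iff[OF P])
      then have "A mod P = A\<^sub>0 mod P \<or> A mod P = (- A\<^sub>0) mod P" by (simp only: mod_eq_dvd_iff)
      with A(1) A\<^sub>0(1) show "A \<in> {A\<^sub>0, (- A\<^sub>0) mod P}" by (auto simp: residues_def)
    qed
    then have "card (?fibre x) \<le> card {A\<^sub>0, (- A\<^sub>0) mod P}" by (intro card_mono) auto
    also have "\<dots> \<le> 2" by (cases "A\<^sub>0 = (- A\<^sub>0) mod P") auto
    finally show ?thesis .
  qed
  have "card ?V = card (\<Union>x\<in>?sq ` ?V. ?fibre x)" by (rule arg_cong[of _ _ card]) blast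
  also have "\<dots> \<le> (\<Sum>x\<in>?sq ` ?V. card (?fibre x))"
    by (rule card_UN_le) (simp add: card_residues(1)[OF P0])
  also have "\<dots> \<le> (\<Sum>x\<in>?sq ` ?V. 2)" using fibre by (rule sum_mono)
  finally show ?thesis by simp
qed

lemma exists_square_eq_translated_square_mod_prime:
  fixes P :: "'a::{field,finite} poly"
  assumes odd: "odd CARD('a)" and P: "prime_elem P" and PT: "\<not> P dvd T_poly"
  obtains A B where "A\<^sup>2 mod P = (u - T_poly * (B\<^sup>2 mod P)) mod P"
proof -
  \<comment> \<open>The squares and their images under \<open>x \<mapsto> u - T x\<close> each fill more than half of the
    odd number \<open>|P|\<close> of residues, so the two sets meet.\<close>
  let ?V = "residues P" and ?X = "(\<lambda>A. A\<^sup>2 mod P) ` residues P"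
  let ?g = "\<lambda>x. (u - T_poly * x) mod P"
  have P0: "P \<noteq> 0" using P by auto
  have finV: "finite ?V" and "card ?V = CARD('a) ^ degree P" using card_residues[OF P0] by auto
  then have oddV: "odd (card ?V)" using odd by simp
  have X: "?X \<subseteq> ?V" "finite ?X" using finV by (auto simp: residues_def)
  have "inj_on ?g ?X"
  proof (rule inj_onI)
    fix x y assume x: "x \<in> ?X" and y: "y \<in> ?X" and "?g x = ?g y"
    then have "P dvd (u - T_poly * x) - (u - T_poly * y)" by (simp add: mod_eq_dvd_iff)
    then have "P dvd (y - x) * T_poly" by (simp add: algebra_simps)
    then have "P dvd y - x" using P PT prime_elem_dvd_mult_iff by blast
    then have "y mod P = x mod P" by (simp add: mod_eq_dvd_iff)
    with x y X(1) show "x = y" by (auto simp: residues_def)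
  qed
  then have card_g: "card (?g ` ?X) = card ?X" by (rule card_image)
  have "?X \<inter> ?g ` ?X \<noteq> {}"
  proof
    assume "?X \<inter> ?g ` ?X = {}"
    then have "card (?X \<union> ?g ` ?X) = card ?X + card (?g ` ?X)"
      using X(2) by (intro card_Un_disjoint) auto
    then have "card (?X \<union> ?g ` ?X) = 2 * card ?X" using card_g by simp
    moreover have "card (?X \<union> ?g ` ?X) \<le> card ?V" using X finV by (intro card_mono) (auto simp: residues_def)
    ultimately have "card ?V = 2 * card ?X"
      using card_residues_le_twice_card_squares[OF P] by linarith
    with oddV show False by simp
  qed
  then obtain x where x: "x \<in> ?X" "x \<in> ?g ` ?X" by blast
  then obtain A y where A: "x = A\<^sup>2 mod P" and y: "y \<in> ?X" "x = ?g y" by blast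
  then obtain B where "y = B\<^sup>2 mod P" by blast
  with A y have "A\<^sup>2 mod P = (u - T_poly * (B\<^sup>2 mod P)) mod P" by simp
  then show ?thesis by (rule that)
qed

lemma mod_prime_in_sq_form_set:
  fixes P :: "'a::{field,finite} poly"
  assumes "odd CARD('a)" "prime_elem P" "\<not> P dvd T_poly"
  shows "u mod P \<in> sq_form_set P"
proof -
  obtain A B where AB: "A\<^sup>2 mod P = (u - T_poly * (B\<^sup>2 mod P)) mod P"
    by (rule exists_square_eq_translated_square_mod_prime[OF assms])
  have "(u - T_poly * (B\<^sup>2 mod P)) mod P = (u - (T_poly * (B\<^sup>2 mod P)) mod P) mod P"
    by (rule mod_diff_right_eq[symmetric])
  also have "\<dots> = (u - T_poly * B\<^sup>2) mod P" by (simp only: mod_mult_right_eq mod_diff_right_eq)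
  finally have "A\<^sup>2 mod P = (u - T_poly * B\<^sup>2) mod P" using AB by simp
  then have "(A\<^sup>2 + T_poly * B\<^sup>2) mod P = (u - T_poly * B\<^sup>2 + T_poly * B\<^sup>2) mod P"
    by (rule mod_add_cong) (rule refl)
  then have "u mod P = (A\<^sup>2 + T_poly * B\<^sup>2) mod P" by simp
  then show ?thesis by (auto simp: sq_form_set_def T_poly_def)
qed

lemma mod_in_sq_form_set_if_coprime:
  fixes P :: "'a::{field,finite} poly"
  assumes odd: "odd CARD('a)" and P: "monic_irred P" and PT: "\<not> P dvd T_poly"
    and u: "\<not> P dvd u"
  shows "u mod P ^ \<mu> \<in> sq_form_set (P ^ \<mu>)"
proof -
  have "u mod P ^ 1 \<in> sq_form_set (P ^ 1)"
    using mod_prime_in_sq_form_set[OF odd monic_irredD(3)[OF P] PT] by simp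
  moreover have "\<not> P ^ 1 dvd u" using u by simp
  ultimately show ?thesis by (rule mod_in_sq_form_set_lift[OF two_neq_zero_if_odd_card[OF odd] P])
qed

section \<open>Vanishing of the local density\<close>

lemma local_density_eq_0_if_empty:
  fixes P :: "'a::{field,finite} poly"
  assumes P0: "P \<noteq> 0" and empty: "sq_form_tuple_set h (P ^ \<nu>) = {}"
  shows "local_density h P = 0"
proof -
  have "eventually (\<lambda>\<mu>. density_ratio h P \<mu> = 0) sequentially"
    unfolding eventually_at_top_linorder density_ratio_def
    by (intro exI[of _ \<nu>] allI impI) (simp add: sq_form_tuple_set_power_eq_empty_mono[OF empty])
  then have "density_ratio h P \<longlonglongrightarrow> 0" by (rule tendsto_eventually)
  then show ?thesis using density_ratio_tendsto_local_density[OF P0] LIMSEQ_unique by blast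
qed

text \<open>Only used as a bound for the degrees of all the differences \<open>h\<^sub>i - h\<^sub>j\<close>.\<close>
definition diff_degree :: "'a::ab_group_add poly list \<Rightarrow> nat" where
  "diff_degree h = (\<Sum>i<length h. \<Sum>j<length h. degree (h ! i - h ! j))"

lemma not_dvd_diff_if_diff_degree_less:
  fixes Q :: "'a::field poly"
  assumes "distinct h" "i < length h" "j < length h" "i \<noteq> j" "diff_degree h < degree Q"
  shows "\<not> Q dvd h ! i - h ! j"
proof (rule not_dvd_if_degree_less)
  show "h ! i - h ! j \<noteq> 0" using assms(1-4) by (simp add: nth_eq_iff_index_eq)
  have "degree (h ! i - h ! j) \<le> (\<Sum>j<length h. degree (h ! i - h ! j))"
    using assms(3) by (intro member_le_sum) auto
  also have "\<dots> \<le> diff_degree h"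
    unfolding diff_degree_def using assms(2)
    by (intro member_le_sum[of i "{..<length h}" "\<lambda>i. \<Sum>j<length h. degree (h ! i - h ! j)"]) auto
  finally show "degree (h ! i - h ! j) < degree Q" using assms(5) by simp
qed

lemma card_ge_if_contains_coset:
  fixes P :: "'a::{field,finite} poly"
  assumes P0: "P \<noteq> 0" and L: "L \<le> \<mu>"
    and coset: "\<And>x. P ^ L dvd x - g \<Longrightarrow> x mod P ^ \<mu> = x \<Longrightarrow> x \<in> S"
    and "finite S"
  shows "CARD('a) ^ (degree P * (\<mu> - L)) \<le> card S"
proof -
  let ?lift = "\<lambda>c. (g + P ^ L * c) mod P ^ \<mu>"
  have split: "P ^ \<mu> = P ^ L * P ^ (\<mu> - L)" using L by (simp add: power_add[symmetric])
  have "inj_on ?lift (residues (P ^ (\<mu> - L)))"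
  proof (rule inj_onI)
    fix c c' assume c: "c \<in> residues (P ^ (\<mu> - L))" and c': "c' \<in> residues (P ^ (\<mu> - L))"
      and "?lift c = ?lift c'"
    then have "P ^ L * P ^ (\<mu> - L) dvd P ^ L * (c - c')"
      by (simp add: mod_eq_dvd_iff split algebra_simps)
    then have "P ^ (\<mu> - L) dvd c - c'" using P0 by simp
    then have "c mod P ^ (\<mu> - L) = c' mod P ^ (\<mu> - L)" by (simp add: mod_eq_dvd_iff)
    with c c' show "c = c'" by (simp add: residues_def)
  qed
  moreover have "?lift ` residues (P ^ (\<mu> - L)) \<subseteq> S"
  proof (rule image_subsetI, rule coset)
    fix c
    have "P ^ L dvd P ^ \<mu>" by (simp add: split)
    moreover have "P ^ \<mu> dvd ?lift c - (g + P ^ L * c)" unfolding mod_eq_dvd_iff[symmetric] by simp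
    ultimately have "P ^ L dvd ?lift c - (g + P ^ L * c)" by (rule dvd_trans)
    then have "P ^ L dvd (?lift c - (g + P ^ L * c)) + P ^ L * c" by (rule dvd_add) simp
    then show "P ^ L dvd ?lift c - g" by (simp add: algebra_simps)
  qed simp
  ultimately have "card (residues (P ^ (\<mu> - L))) \<le> card S"
    using card_image card_mono[OF \<open>finite S\<close>] by metis
  then show ?thesis using card_residues_power[OF P0] by simp
qed

lemma mod_in_sq_form_set_lift_cong:
  fixes P :: "'a::{field,finite} poly"
  assumes "(2::'a) \<noteq> 0" "monic_irred P"
    and z: "z mod P ^ n \<in> sq_form_set (P ^ n)" "\<not> P ^ n dvd z" and cong: "P ^ n dvd z' - z"
  shows "z' mod P ^ \<mu> \<in> sq_form_set (P ^ \<mu>)"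
proof (rule mod_in_sq_form_set_lift[OF assms(1,2)])
  have "z' mod P ^ n = z mod P ^ n" using cong by (simp add: mod_eq_dvd_iff)
  with z(1) show "z' mod P ^ n \<in> sq_form_set (P ^ n)" by simp
  show "\<not> P ^ n dvd z'"
  proof
    assume "P ^ n dvd z'"
    then have "P ^ n dvd z' - (z' - z)" using cong by (rule dvd_diff)
    with z(2) show False by simp
  qed
qed

lemma not_power_Suc_double_dvd_square:
  fixes P :: "'a::field poly"
  assumes "degree P > 0"
  shows "\<not> P ^ Suc (2 * n) dvd (P ^ n)\<^sup>2"
proof
  assume a: "P ^ Suc (2 * n) dvd (P ^ n)\<^sup>2"
  have P0: "P \<noteq> 0" using assms by auto
  have "(P ^ n)\<^sup>2 = P ^ (2 * n)" by (simp only: power_even_eq)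
  with a have "P ^ Suc (2 * n) dvd P ^ (2 * n)" by (simp only:)
  then have "degree (P ^ Suc (2 * n)) \<le> degree (P ^ (2 * n))"
    by (rule dvd_imp_degree_le) (simp add: P0)
  then have "Suc (2 * n) * degree P \<le> 2 * n * degree P"
    by (simp only: degree_power_eq[OF P0])
  with assms show False by simp
qed

lemma exists_coset_in_sq_form_tuple_sets:
  fixes P :: "'a::{field,finite} poly"
  assumes odd: "odd CARD('a)" and P: "monic_irred P" and dist: "distinct h"
    and ne: "sq_form_tuple_set h (P ^ Suc (diff_degree h)) \<noteq> {}"
  obtains L g where
    "\<And>x \<mu> i. P ^ L dvd x - g \<Longrightarrow> i < length h \<Longrightarrow> (x + h ! i) mod P ^ \<mu> \<in> sq_form_set (P ^ \<mu>)"
proof -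
  note lift = mod_in_sq_form_set_lift_cong[OF two_neq_zero_if_odd_card[OF odd] P]
  have P0: "P \<noteq> 0" and deg: "degree P > 0" using monic_irredD[OF P] by auto
  define n where "n = Suc (diff_degree h)"
  have "n \<le> n * degree P" using deg by simp
  then have "diff_degree h < degree (P ^ n)"
    using degree_power_eq[OF P0, of n] unfolding n_def by linarith
  then have nd: "\<not> P ^ n dvd h ! i - h ! j" if "i < length h" "j < length h" "i \<noteq> j" for i j
    using not_dvd_diff_if_diff_degree_less[OF dist that] by blast
  obtain f where f: "f \<in> sq_form_tuple_set h (P ^ n)" using ne by (auto simp: n_def)
  then have f_sq: "(f + h ! i) mod P ^ n \<in> sq_form_set (P ^ n)" if "i < length h" for i
    using that by (auto simp: sq_form_tuple_set_def)
  show ?thesis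
  proof (cases "\<exists>i<length h. P ^ n dvd f + h ! i")
    case False
    \<comment> \<open>No \<open>f + h\<^sub>i\<close> vanishes modulo \<open>P\<^sup>n\<close>: the class of \<open>f\<close> modulo \<open>P\<^sup>n\<close> works.\<close>
    show ?thesis
    proof (rule that[of n f])
      fix x \<mu> i assume "P ^ n dvd x - f" "i < length h"
      with False show "(x + h ! i) mod P ^ \<mu> \<in> sq_form_set (P ^ \<mu>)"
        using lift[OF f_sq] by simp
    qed
  next
    case True
    then obtain i\<^sub>0 where i\<^sub>0: "i\<^sub>0 < length h" "P ^ n dvd f + h ! i\<^sub>0" by blast
    \<comment> \<open>Replace \<open>f\<close> by \<open>P\<^sup>2\<^sup>n - h\<^sub>i\<^sub>0\<close>: now \<open>x + h\<^sub>i\<^sub>0 \<equiv> (P\<^sup>n)\<^sup>2\<close> is a nonzero square modulo \<open>P\<^sup>2\<^sup>n\<^sup>+\<^sup>1\<close>,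
      while \<open>x \<equiv> f\<close> modulo \<open>P\<^sup>n\<close> handles the other indices.\<close>
    show ?thesis
    proof (rule that[of "Suc (2 * n)" "(P ^ n)\<^sup>2 - h ! i\<^sub>0"])
      fix x \<mu> i assume x: "P ^ Suc (2 * n) dvd x - ((P ^ n)\<^sup>2 - h ! i\<^sub>0)" and i: "i < length h"
      show "(x + h ! i) mod P ^ \<mu> \<in> sq_form_set (P ^ \<mu>)"
      proof (cases "i = i\<^sub>0")
        case True
        have "P ^ Suc (2 * n) dvd (P ^ n)\<^sup>2 - ((P ^ n)\<^sup>2 + T_poly * 0\<^sup>2)" by simp
        then have "(P ^ n)\<^sup>2 mod P ^ Suc (2 * n) \<in> sq_form_set (P ^ Suc (2 * n))"
          unfolding mod_in_sq_form_set_iff by blast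
        moreover have "P ^ Suc (2 * n) dvd (x + h ! i) - (P ^ n)\<^sup>2"
          using x True by (simp add: algebra_simps)
        ultimately show ?thesis by (rule lift[OF _ not_power_Suc_double_dvd_square[OF deg]])
      next
        case False
        have "\<not> P ^ n dvd f + h ! i"
        proof
          assume "P ^ n dvd f + h ! i"
          then have "P ^ n dvd (f + h ! i) - (f + h ! i\<^sub>0)" using i\<^sub>0(2) by (rule dvd_diff)
          with nd[OF i i\<^sub>0(1) False] show False by simp
        qed
        moreover have "P ^ n dvd (x + h ! i) - (f + h ! i)"
        proof -
          have "P ^ n dvd P ^ Suc (2 * n)" by (rule le_imp_power_dvd) simp
          then have "P ^ n dvd x - ((P ^ n)\<^sup>2 - h ! i\<^sub>0)" using x by (rule dvd_trans)
          moreover have "P ^ n dvd (P ^ n)\<^sup>2 - (f + h ! i\<^sub>0)"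
            using i\<^sub>0(2) by (intro dvd_diff) (simp_all add: power2_eq_square)
          ultimately have "P ^ n dvd (x - ((P ^ n)\<^sup>2 - h ! i\<^sub>0)) + ((P ^ n)\<^sup>2 - (f + h ! i\<^sub>0))"
            by (rule dvd_add)
          then show ?thesis by (simp add: algebra_simps)
        qed
        ultimately show ?thesis using lift[OF f_sq[OF i]] by blast
      qed
    qed
  qed
qed

lemma local_density_pos:
  fixes P :: "'a::{field,finite} poly"
  assumes odd: "odd CARD('a)" and P: "monic_irred P" and dist: "distinct h"
    and ne: "\<forall>\<nu>\<ge>1. sq_form_tuple_set h (P ^ \<nu>) \<noteq> {}"
  shows "local_density h P > 0"
proof -
  have P0: "P \<noteq> 0" using monic_irredD[OF P] by simp
  have "1 \<le> Suc (diff_degree h)" by simp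
  with ne have "sq_form_tuple_set h (P ^ Suc (diff_degree h)) \<noteq> {}" by blast
  then obtain L g where coset:
    "\<And>x \<mu> i. P ^ L dvd x - g \<Longrightarrow> i < length h \<Longrightarrow> (x + h ! i) mod P ^ \<mu> \<in> sq_form_set (P ^ \<mu>)"
  proof (rule exists_coset_in_sq_form_tuple_sets[OF odd P dist])
    fix L g
    assume "\<And>x \<mu> i. P ^ L dvd x - g \<Longrightarrow> i < length h \<Longrightarrow> (x + h ! i) mod P ^ \<mu> \<in> sq_form_set (P ^ \<mu>)"
    then show thesis by (rule that)
  qed
  let ?q = "real CARD('a)" and ?d = "degree P"
  have "1 / ?q ^ (?d * L) \<le> density_ratio h P \<mu>" if "L \<le> \<mu>" for \<mu>
  proof -
    have "CARD('a) ^ (?d * (\<mu> - L)) \<le> card (sq_form_tuple_set h (P ^ \<mu>))"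
      using that coset by (intro card_ge_if_contains_coset[OF P0] finite_sq_form_tuple_set)
        (auto simp: sq_form_tuple_set_def P0)
    then have "?q ^ (?d * (\<mu> - L)) / ?q ^ (?d * \<mu>) \<le> density_ratio h P \<mu>"
      unfolding density_ratio_def by (intro divide_right_mono) (simp_all add: of_nat_le_iff[symmetric])
    moreover have "?q ^ (?d * \<mu>) = ?q ^ (?d * (\<mu> - L)) * ?q ^ (?d * L)"
      using that by (simp add: power_add[symmetric] diff_mult_distrib2)
    ultimately show ?thesis by simp
  qed
  then have "1 / ?q ^ (?d * L) \<le> local_density h P"
    by (intro LIMSEQ_le_const[OF density_ratio_tendsto_local_density[OF P0]]) auto
  moreover have "0 < 1 / ?q ^ (?d * L)" by simp
  ultimately show ?thesis by linarith
qed

lemma local_density_eq_0_iff: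
  fixes P :: "'a::{field,finite} poly"
  assumes "odd CARD('a)" "monic_irred P" "distinct h"
  shows "local_density h P = 0 \<longleftrightarrow> (\<exists>\<nu>\<ge>1. sq_form_tuple_set h (P ^ \<nu>) = {})"
proof
  assume zero: "local_density h P = 0"
  show "\<exists>\<nu>\<ge>1. sq_form_tuple_set h (P ^ \<nu>) = {}"
  proof (rule ccontr)
    assume "\<not> ?thesis"
    then have "\<forall>\<nu>\<ge>1. sq_form_tuple_set h (P ^ \<nu>) \<noteq> {}" by blast
    then have "local_density h P > 0" by (rule local_density_pos[OF assms])
    with zero show False by simp
  qed
next
  assume "\<exists>\<nu>\<ge>1. sq_form_tuple_set h (P ^ \<nu>) = {}"
  then obtain \<nu> where "sq_form_tuple_set h (P ^ \<nu>) = {}" by blast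
  then show "local_density h P = 0"
    by (rule local_density_eq_0_if_empty[OF monic_irredD(1)[OF assms(2)]])
qed

section \<open>Local factors at generic primes\<close>

lemma sq_form_tuple_set_zero:
  "sq_form_tuple_set [0] M = {f \<in> residues M. f \<in> sq_form_set M}"
  by (auto simp: sq_form_tuple_set_def residues_def)

lemma card_residues_diff_sq_form_le:
  fixes P :: "'a::{field,finite} poly"
  assumes odd: "odd CARD('a)" and P: "monic_irred P" and PT: "\<not> P dvd T_poly" and \<nu>: "1 \<le> \<nu>"
  shows "card (residues (P ^ \<nu>) - sq_form_tuple_set [0] (P ^ \<nu>)) \<le> CARD('a) ^ (degree P * (\<nu> - 1))"
proof -
  have P0: "P \<noteq> 0" using monic_irredD[OF P] by simp
  let ?V = "residues (P ^ \<nu>)" and ?W = "{f \<in> residues (P ^ \<nu>). P dvd f}"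
  have W: "?V - sq_form_tuple_set [0] (P ^ \<nu>) \<subseteq> ?W"
  proof
    fix f assume f: "f \<in> ?V - sq_form_tuple_set [0] (P ^ \<nu>)"
    then have "f mod P ^ \<nu> = f" by (simp add: residues_def)
    with f have "f mod P ^ \<nu> \<notin> sq_form_set (P ^ \<nu>)" by (simp add: sq_form_tuple_set_zero)
    then show "f \<in> ?W" using f mod_in_sq_form_set_if_coprime[OF odd P PT] by blast
  qed
  have inj: "inj_on (\<lambda>f. f div P) ?W"
  proof (rule inj_onI)
    fix f g assume f: "f \<in> ?W" and g: "g \<in> ?W" and eq: "f div P = g div P"
    have "f = P * (f div P)" using f by simp
    also have "\<dots> = P * (g div P)" by (simp only: eq)
    also have "\<dots> = g" using g by simp
    finally show "f = g" .
  qed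
  have sub: "(\<lambda>f. f div P) ` ?W \<subseteq> residues (P ^ (\<nu> - 1))"
  proof (rule image_subsetI)
    fix f assume "f \<in> ?W"
    then have "f = 0 \<or> degree f < degree P + degree (P ^ (\<nu> - 1))"
      using mem_residues_iff[of "P ^ \<nu>" f] P0 \<nu> by (simp add: degree_power_eq algebra_simps)
    then have "f div P = 0 \<or> degree (f div P) < degree (P ^ (\<nu> - 1))"
      using P0 by (intro degree_div_less) auto
    then show "f div P \<in> residues (P ^ (\<nu> - 1))"
      using mem_residues_iff[of "P ^ (\<nu> - 1)" "f div P"] P0 by simp
  qed
  have "card (?V - sq_form_tuple_set [0] (P ^ \<nu>)) \<le> card ?W"
    using card_residues(1)[of "P ^ \<nu>"] P0 by (intro card_mono[OF _ W]) auto
  also have "\<dots> = card ((\<lambda>f. f div P) ` ?W)" by (rule card_image[OF inj, symmetric])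
  also have "\<dots> \<le> card (residues (P ^ (\<nu> - 1)))"
    using card_residues(1)[of "P ^ (\<nu> - 1)"] P0 by (intro card_mono[OF _ sub]) auto
  finally show ?thesis using card_residues_power[OF P0] by simp
qed

lemma card_translate_not_in_sq_form_set:
  "card {f \<in> residues M. (f + c) mod M \<notin> sq_form_set M}
     = card (residues M - sq_form_tuple_set [0] M)"
proof (rule bij_betw_same_card[of "\<lambda>f. (f + c) mod M"])
  show "bij_betw (\<lambda>f. (f + c) mod M) {f \<in> residues M. (f + c) mod M \<notin> sq_form_set M}
          (residues M - sq_form_tuple_set [0] M)"
  proof (rule bij_betw_byWitness[where f'="\<lambda>y. (y - c) mod M"])
    show "\<forall>f\<in>{f \<in> residues M. (f + c) mod M \<notin> sq_form_set M}. ((f + c) mod M - c) mod M = f"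
      by (auto simp: residues_def mod_diff_left_eq)
    show "\<forall>y\<in>residues M - sq_form_tuple_set [0] M. ((y - c) mod M + c) mod M = y"
      by (auto simp: residues_def mod_add_left_eq)
    show "(\<lambda>f. (f + c) mod M) ` {f \<in> residues M. (f + c) mod M \<notin> sq_form_set M}
            \<subseteq> residues M - sq_form_tuple_set [0] M"
      by (auto simp: residues_def sq_form_tuple_set_zero)
    show "(\<lambda>y. (y - c) mod M) ` (residues M - sq_form_tuple_set [0] M)
            \<subseteq> {f \<in> residues M. (f + c) mod M \<notin> sq_form_set M}"
      by (auto simp: residues_def sq_form_tuple_set_zero mod_add_left_eq)
  qed
qed

lemma card_sq_form_tuple_set_generic:
  fixes P :: "'a::{field,finite} poly"
  assumes odd: "odd CARD('a)" and P: "monic_irred P" and PT: "\<not> P dvd T_poly"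
    and nd: "\<And>i j. i < length h \<Longrightarrow> j < length h \<Longrightarrow> i \<noteq> j \<Longrightarrow> \<not> P dvd h ! i - h ! j"
  shows "card (sq_form_tuple_set h (P ^ \<nu>))
           + length h * card (residues (P ^ \<nu>) - sq_form_tuple_set [0] (P ^ \<nu>))
         = card (residues (P ^ \<nu>))"
proof -
  define M where "M = P ^ \<nu>"
  have M0: "M \<noteq> 0" using monic_irredD(1)[OF P] by (simp add: M_def)
  define B where "B i = {f \<in> residues M. (f + h ! i) mod M \<notin> sq_form_set M}" for i
  \<comment> \<open>Every unit lies in \<open>A\<^sub>q(P\<^sup>\<nu>)\<close>, so the sets \<open>B\<^sub>i\<close> of residues excluded by \<open>h\<^sub>i\<close> are disjoint.\<close>
  have dvd: "P dvd f + h ! i" if "f \<in> B i" for f i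
    using that mod_in_sq_form_set_if_coprime[OF odd P PT] by (auto simp: B_def M_def)
  have disj: "B i \<inter> B j = {}" if "i < length h" "j < length h" "i \<noteq> j" for i j
  proof (rule ccontr)
    assume "B i \<inter> B j \<noteq> {}"
    then obtain f where "f \<in> B i" "f \<in> B j" by blast
    then have "P dvd (f + h ! i) - (f + h ! j)" using dvd by (intro dvd_diff)
    with nd[OF that] show False by simp
  qed
  have fin: "finite (B i)" for i using card_residues(1)[OF M0] by (simp add: B_def)
  have "sq_form_tuple_set h M = residues M - (\<Union>i<length h. B i)"
    by (auto simp: sq_form_tuple_set_def residues_def B_def)
  moreover have "card (\<Union>i<length h. B i) = length h * card (residues M - sq_form_tuple_set [0] M)"
    using disj fin by (subst card_UN_disjoint) (auto simp: B_def card_translate_not_in_sq_form_set)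
  moreover have "(\<Union>i<length h. B i) \<subseteq> residues M" by (auto simp: B_def)
  ultimately show ?thesis
    using card_residues(1)[OF M0] card_Diff_subset[of "\<Union>i<length h. B i" "residues M"]
      card_mono[of "residues M" "\<Union>i<length h. B i"]
    by (simp add: M_def finite_subset)
qed

lemma density_ratio_zero_eq:
  fixes P :: "'a::{field,finite} poly"
  assumes P0: "P \<noteq> 0"
  shows "density_ratio [0] P \<nu> = 1 -
    real (card (residues (P ^ \<nu>) - sq_form_tuple_set [0] (P ^ \<nu>))) / real CARD('a) ^ (degree P * \<nu>)"
proof -
  let ?N = "real CARD('a) ^ (degree P * \<nu>)"
  have fin: "finite (sq_form_tuple_set [0] (P ^ \<nu>))" using P0 by (simp add: finite_sq_form_tuple_set)
  have "card (residues (P ^ \<nu>) - sq_form_tuple_set [0] (P ^ \<nu>))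
          = card (residues (P ^ \<nu>)) - card (sq_form_tuple_set [0] (P ^ \<nu>))"
    by (rule card_Diff_subset[OF fin sq_form_tuple_set_subset_residues])
  moreover have "card (sq_form_tuple_set [0] (P ^ \<nu>)) \<le> card (residues (P ^ \<nu>))"
    using card_residues(1)[of "P ^ \<nu>"] P0 by (intro card_mono sq_form_tuple_set_subset_residues) simp
  ultimately have "real (card (sq_form_tuple_set [0] (P ^ \<nu>)))
      = ?N - real (card (residues (P ^ \<nu>) - sq_form_tuple_set [0] (P ^ \<nu>)))"
    using card_residues_power[OF P0, of \<nu>] by (simp add: of_nat_diff)
  moreover have "?N > 0" by simp
  ultimately show ?thesis by (simp add: density_ratio_def diff_divide_distrib)
qed

lemma density_ratio_generic:
  fixes P :: "'a::{field,finite} poly"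
  assumes odd: "odd CARD('a)" and P: "monic_irred P" and PT: "\<not> P dvd T_poly"
    and nd: "\<And>i j. i < length h \<Longrightarrow> j < length h \<Longrightarrow> i \<noteq> j \<Longrightarrow> \<not> P dvd h ! i - h ! j"
  shows "density_ratio h P \<nu> = 1 - real (length h) * (1 - density_ratio [0] P \<nu>)"
proof -
  have P0: "P \<noteq> 0" using monic_irredD[OF P] by simp
  let ?N = "real CARD('a) ^ (degree P * \<nu>)"
  let ?D = "real (card (residues (P ^ \<nu>) - sq_form_tuple_set [0] (P ^ \<nu>)))"
  have "real (card (sq_form_tuple_set h (P ^ \<nu>))) + real (length h) * ?D = ?N"
    using arg_cong[OF card_sq_form_tuple_set_generic[OF odd P PT nd, of \<nu>], of real]
      card_residues_power[OF P0, of \<nu>] by simp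
  then have "real (card (sq_form_tuple_set h (P ^ \<nu>))) = ?N - real (length h) * ?D" by linarith
  then have "density_ratio h P \<nu> = 1 - real (length h) * (?D / ?N)"
    by (simp add: density_ratio_def diff_divide_distrib)
  also have "?D / ?N = 1 - density_ratio [0] P \<nu>" by (simp add: density_ratio_zero_eq[OF P0])
  finally show ?thesis .
qed

lemma density_ratio_zero_bounds:
  fixes P :: "'a::{field,finite} poly"
  assumes odd: "odd CARD('a)" and P: "monic_irred P" and PT: "\<not> P dvd T_poly" and \<nu>: "1 \<le> \<nu>"
  shows "1 - 1 / real CARD('a) ^ degree P \<le> density_ratio [0] P \<nu>"
    and "density_ratio [0] P \<nu> \<le> 1"
proof -
  have P0: "P \<noteq> 0" using monic_irredD[OF P] by simp
  let ?q = "real CARD('a)" and ?d = "degree P"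
  let ?D = "real (card (residues (P ^ \<nu>) - sq_form_tuple_set [0] (P ^ \<nu>)))"
  have ratio: "density_ratio [0] P \<nu> = 1 - ?D / ?q ^ (?d * \<nu>)"
    by (rule density_ratio_zero_eq[OF P0])
  have "?D \<le> ?q ^ (?d * (\<nu> - 1))"
    using card_residues_diff_sq_form_le[OF odd P PT \<nu>] by (metis of_nat_le_iff of_nat_power)
  moreover have "?q ^ (?d * \<nu>) = ?q ^ (?d * (\<nu> - 1)) * ?q ^ ?d"
    using \<nu> by (simp add: power_add[symmetric] diff_mult_distrib2)
  ultimately have "?D / ?q ^ (?d * \<nu>) \<le> 1 / ?q ^ ?d" by (simp add: field_simps)
  then show "1 - 1 / ?q ^ ?d \<le> density_ratio [0] P \<nu>" using ratio by simp
  show "density_ratio [0] P \<nu> \<le> 1" using ratio by simp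
qed

lemma local_density_generic:
  fixes P :: "'a::{field,finite} poly"
  assumes odd: "odd CARD('a)" and P: "monic_irred P" and PT: "\<not> P dvd T_poly"
    and nd: "\<And>i j. i < length h \<Longrightarrow> j < length h \<Longrightarrow> i \<noteq> j \<Longrightarrow> \<not> P dvd h ! i - h ! j"
  shows "local_density h P = 1 - real (length h) * (1 - local_density [0] P)"
    and "1 - 1 / real CARD('a) ^ degree P \<le> local_density [0] P"
    and "local_density [0] P \<le> 1"
proof -
  have P0: "P \<noteq> 0" using monic_irredD[OF P] by simp
  note lim0 = density_ratio_tendsto_local_density[OF P0, of "[0]"]
  have "(\<lambda>\<nu>. 1 - real (length h) * (1 - density_ratio [0] P \<nu>))
          \<longlonglongrightarrow> 1 - real (length h) * (1 - local_density [0] P)"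
    by (intro tendsto_intros lim0)
  moreover have "density_ratio h P = (\<lambda>\<nu>. 1 - real (length h) * (1 - density_ratio [0] P \<nu>))"
    using density_ratio_generic[OF odd P PT nd] by (rule ext)
  ultimately have "density_ratio h P \<longlonglongrightarrow> 1 - real (length h) * (1 - local_density [0] P)"
    by simp
  then show "local_density h P = 1 - real (length h) * (1 - local_density [0] P)"
    using density_ratio_tendsto_local_density[OF P0] LIMSEQ_unique by blast
  show "1 - 1 / real CARD('a) ^ degree P \<le> local_density [0] P"
    using density_ratio_zero_bounds(1)[OF odd P PT] by (intro LIMSEQ_le_const[OF lim0]) blast
  show "local_density [0] P \<le> 1"
    using density_ratio_zero_bounds(2)[OF odd P PT] by (intro LIMSEQ_le_const2[OF lim0]) blast
qed

lemma one_minus_mult_div_power_bounds: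
  fixes e :: real
  assumes e0: "0 \<le> e" and e1: "e < 1" and ke: "real k * e \<le> 1"
  shows "1 - (real k * e)\<^sup>2 \<le> (1 - real k * e) / (1 - e) ^ k"
    and "(1 - real k * e) / (1 - e) ^ k \<le> 1"
proof -
  have pos: "(1 - e) ^ k > 0" using e1 by simp
  have "1 + real k * (- e) \<le> (1 + (- e)) ^ k" using e1 by (intro Bernoulli_inequality) simp
  then show "(1 - real k * e) / (1 - e) ^ k \<le> 1" using pos by simp
  have "(1 - e) ^ k * (1 + real k * e) \<le> (1 - e) ^ k * (1 + e) ^ k"
    using pos e0 by (intro mult_left_mono Bernoulli_inequality) auto
  also have "\<dots> = (1 - e\<^sup>2) ^ k" by (simp add: power_mult_distrib[symmetric] algebra_simps power2_eq_square)
  also have "\<dots> \<le> 1" using e0 e1 by (intro power_le_one) (auto simp: power2_eq_square mult_le_one)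
  finally have "(1 - e) ^ k * (1 + real k * e) \<le> 1" .
  then have "(1 - real k * e) * ((1 - e) ^ k * (1 + real k * e)) \<le> (1 - real k * e) * 1"
    using ke by (intro mult_left_mono) auto
  then have "(1 - (real k * e)\<^sup>2) * (1 - e) ^ k \<le> 1 - real k * e"
    by (simp add: algebra_simps power2_eq_square)
  then show "1 - (real k * e)\<^sup>2 \<le> (1 - real k * e) / (1 - e) ^ k"
    using pos by (simp add: pos_le_divide_eq)
qed

lemma local_factor_bounds:
  fixes P :: "'a::{field,finite} poly"
  assumes odd: "odd CARD('a)" and P: "monic_irred P" and PT: "\<not> P dvd T_poly"
    and nd: "\<And>i j. i < length h \<Longrightarrow> j < length h \<Longrightarrow> i \<noteq> j \<Longrightarrow> \<not> P dvd h ! i - h ! j"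
    and kq: "real (length h) \<le> real CARD('a) ^ degree P"
  shows "1 - real (length h) ^ 2 / real CARD('a) ^ (2 * degree P) \<le> local_factor h P"
    and "local_factor h P \<le> 1"
proof -
  let ?q = "real CARD('a)" and ?d = "degree P" and ?k = "length h"
  define e where "e = 1 - local_density [0] P"
  note dens = local_density_generic[OF odd P PT nd]
  have factor: "local_factor h P = (1 - real ?k * e) / (1 - e) ^ ?k"
    by (simp add: local_factor_def dens(1) e_def)
  have e0: "0 \<le> e" using dens(3) by (simp add: e_def)
  have eq: "e \<le> 1 / ?q ^ ?d" using dens(2) by (simp add: e_def)
  have q2: "2 \<le> ?q" using two_le_card_field[where 'a='a] by simp
  then have "?q \<le> ?q ^ ?d" using monic_irredD(2)[OF P] by (intro self_le_power) auto
  with q2 have "1 < ?q ^ ?d" by linarith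
  then have "1 / ?q ^ ?d < 1" by simp
  with eq have e1: "e < 1" by linarith
  have ke: "real ?k * e \<le> real ?k / ?q ^ ?d"
    using eq by (simp add: mult_left_mono divide_inverse)
  also have "\<dots> \<le> 1" using kq by simp
  finally have ke1: "real ?k * e \<le> 1" .
  note bounds = one_minus_mult_div_power_bounds[OF e0 e1 ke1]
  show "local_factor h P \<le> 1" using bounds(2) factor by simp
  have "(real ?k * e)\<^sup>2 \<le> (real ?k / ?q ^ ?d)\<^sup>2" using ke e0 by (intro power_mono) auto
  also have "\<dots> = real ?k ^ 2 / ?q ^ (2 * ?d)" by (simp add: power_divide power_mult[symmetric] mult.commute)
  finally show "1 - real ?k ^ 2 / ?q ^ (2 * ?d) \<le> local_factor h P" using bounds(1) factor by simp
qed

section \<open>Convergence of the singular series\<close>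

lemma prod_unit_interval_bounds:
  fixes g :: "'b \<Rightarrow> real"
  assumes "finite S" "\<And>x. x \<in> S \<Longrightarrow> 0 \<le> g x \<and> g x \<le> 1"
  shows "1 - prod g S \<le> (\<Sum>x\<in>S. 1 - g x) \<and> 0 \<le> prod g S \<and> prod g S \<le> 1"
  using assms
proof (induction S rule: finite_induct)
  case (insert x F)
  then have IH: "1 - prod g F \<le> (\<Sum>x\<in>F. 1 - g x)" "0 \<le> prod g F" "prod g F \<le> 1"
    and gx: "0 \<le> g x" "g x \<le> 1" by auto
  have "0 \<le> (1 - g x) * (1 - prod g F)" using gx IH by simp
  then have "1 - g x * prod g F \<le> (1 - g x) + (1 - prod g F)" by (simp add: algebra_simps)
  moreover have "0 \<le> g x * prod g F" "g x * prod g F \<le> 1" using gx IH by (simp_all add: mult_le_one)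
  ultimately show ?case using IH insert.hyps by simp
qed simp

lemma finite_monic_irred_degree:
  "finite {P::'a::{field,finite} poly. monic_irred P \<and> degree P = n}"
  and card_monic_irred_degree_le:
  "card {P::'a::{field,finite} poly. monic_irred P \<and> degree P = n} \<le> CARD('a) ^ Suc n"
proof -
  have sub: "{P::'a poly. monic_irred P \<and> degree P = n} \<subseteq> polys_degree_less (Suc n)"
    by (auto simp: mem_polys_degree_less)
  then show "finite {P::'a poly. monic_irred P \<and> degree P = n}"
    using card_polys_degree_less(1) by (rule finite_subset)
  show "card {P::'a poly. monic_irred P \<and> degree P = n} \<le> CARD('a) ^ Suc n"
    using card_mono[OF card_polys_degree_less(1) sub] card_polys_degree_less(2)[of "Suc n", where 'a='a]
    by simp
qed

lemma local_density_zero_pos: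
  fixes P :: "'a::{field,finite} poly"
  assumes "odd CARD('a)" "monic_irred P"
  shows "local_density [0] P > 0"
proof (rule local_density_pos[OF assms])
  have "(0::'a poly) mod M \<in> sq_form_set M" for M
    unfolding sq_form_set_def by (rule CollectI, rule exI[of _ 0], rule exI[of _ 0]) simp
  then have "0 \<in> sq_form_tuple_set [0] M" for M :: "'a poly"
    by (simp add: sq_form_tuple_set_def)
  then show "\<forall>\<nu>\<ge>1. sq_form_tuple_set [0] (P ^ \<nu>) \<noteq> {}" by blast
qed simp

lemma local_factor_bounds_large_degree:
  fixes P :: "'a::{field,finite} poly"
  assumes odd: "odd CARD('a)" and dist: "distinct h" and P: "monic_irred P"
    and deg: "diff_degree h + length h + 2 \<le> degree P"
  shows "1 - real (length h) ^ 2 / real CARD('a) ^ (2 * degree P) \<le> local_factor h P"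
    and "local_factor h P \<le> 1"
    and "real (length h) ^ 2 / real CARD('a) ^ (2 * degree P) \<le> 1"
proof -
  let ?q = "real CARD('a)" and ?k = "length h" and ?d = "degree P"
  have "?k < 2 ^ ?k" by (rule less_exp)
  also have "(2::nat) ^ ?k \<le> 2 ^ ?d" using deg by (intro power_increasing) auto
  also have "(2::nat) ^ ?d \<le> CARD('a) ^ ?d" using two_le_card_field by (intro power_mono) auto
  finally have "?k \<le> CARD('a) ^ ?d" by simp
  then have kq: "real ?k \<le> ?q ^ ?d" by (metis of_nat_le_iff of_nat_power)
  have PT: "\<not> P dvd T_poly"
  proof
    assume "P dvd T_poly"
    then have "degree P = 1" using monic_irred_dvd_T_poly_imp_eq[OF P] by simp
    with deg show False by simp
  qed
  have nd: "\<not> P dvd h ! i - h ! j" if "i < ?k" "j < ?k" "i \<noteq> j" for i j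
    using not_dvd_diff_if_diff_degree_less[OF dist that] deg by simp
  show "1 - real ?k ^ 2 / ?q ^ (2 * ?d) \<le> local_factor h P" "local_factor h P \<le> 1"
    using local_factor_bounds[OF odd P PT nd kq] by simp_all
  have "real ?k ^ 2 \<le> (?q ^ ?d)\<^sup>2" using kq by (intro power_mono) auto
  also have "\<dots> = ?q ^ (2 * ?d)" by (simp only: power_even_eq)
  finally show "real ?k ^ 2 / ?q ^ (2 * ?d) \<le> 1" by simp
qed

lemma degree_factor_close_to_one:
  fixes h :: "'a::{field,finite} poly list"
  assumes odd: "odd CARD('a)" and dist: "distinct h"
    and n: "diff_degree h + length h + 2 \<le> n"
  shows "\<bar>degree_factor h n - 1\<bar> \<le> real (length h) ^ 2 * real CARD('a) * (1 / real CARD('a)) ^ n"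
proof -
  let ?q = "real CARD('a)" and ?e = "real (length h) ^ 2 / real CARD('a) ^ (2 * n)"
  let ?S = "{P::'a poly. monic_irred P \<and> degree P = n}"
  have bound: "1 - ?e \<le> local_factor h P \<and> local_factor h P \<le> 1 \<and> ?e \<le> 1" if P: "P \<in> ?S" for P
  proof -
    have mi: "monic_irred P" and dP: "degree P = n" using P by simp_all
    then have "diff_degree h + length h + 2 \<le> degree P" using n by simp
    note b = local_factor_bounds_large_degree[OF odd dist mi this]
    show ?thesis using b[unfolded dP] by blast
  qed
  then have "0 \<le> local_factor h P \<and> local_factor h P \<le> 1" if "P \<in> ?S" for P
    using that by (meson diff_ge_0_iff_ge order_trans)
  then have prod: "1 - degree_factor h n \<le> (\<Sum>P\<in>?S. 1 - local_factor h P) \<and> degree_factor h n \<le> 1"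
    using prod_unit_interval_bounds[OF finite_monic_irred_degree[of n], of "local_factor h"]
    unfolding degree_factor_def by blast
  have "(\<Sum>P\<in>?S. 1 - local_factor h P) \<le> (\<Sum>P\<in>?S. ?e)"
  proof (rule sum_mono)
    fix P assume "P \<in> ?S"
    then show "1 - local_factor h P \<le> ?e" using bound[of P] by linarith
  qed
  also have "\<dots> = real (card ?S) * ?e" by simp
  also have "\<dots> \<le> ?q ^ Suc n * ?e"
  proof (rule mult_right_mono)
    show "real (card ?S) \<le> ?q ^ Suc n"
      using card_monic_irred_degree_le[of n, where 'a='a] by (metis of_nat_le_iff of_nat_power)
  qed simp
  also have "\<dots> = real (length h) ^ 2 * ?q * (1 / ?q) ^ n"
  proof -
    have "?q ^ (2 * n) = ?q ^ n * ?q ^ n" by (simp add: mult_2 power_add)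
    then show ?thesis by (simp add: power_one_over field_simps)
  qed
  finally show ?thesis using prod by simp
qed

lemma convergent_prod_degree_factor:
  fixes h :: "'a::{field,finite} poly list"
  assumes "odd CARD('a)" "distinct h"
  shows "convergent_prod (degree_factor h)"
proof -
  let ?q = "real CARD('a)"
  have "summable (\<lambda>n. real (length h) ^ 2 * ?q * (1 / ?q) ^ n)"
    using two_le_card_field[where 'a='a] by (intro summable_mult summable_geometric) auto
  moreover have "eventually (\<lambda>n. norm (norm (degree_factor h n - 1))
                    \<le> real (length h) ^ 2 * ?q * (1 / ?q) ^ n) sequentially"
    unfolding eventually_at_top_linorder
    using degree_factor_close_to_one[OF assms] by (intro exI[of _ "diff_degree h + length h + 2"]) simp
  ultimately have "summable (\<lambda>n. norm (degree_factor h n - 1))"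
    by (rule summable_comparison_test_ev[rotated])
  then show ?thesis
    by (intro abs_convergent_prod_imp_convergent_prod summable_imp_abs_convergent_prod)
qed

lemma degree_factor_eq_0_iff:
  fixes h :: "'a::{field,finite} poly list"
  assumes "odd CARD('a)"
  shows "degree_factor h n = 0 \<longleftrightarrow> (\<exists>P. monic_irred P \<and> degree P = n \<and> local_density h P = 0)"
proof -
  have "local_factor h P = 0 \<longleftrightarrow> local_density h P = 0" if "monic_irred P" for P
    using local_density_zero_pos[OF assms that] by (simp add: local_factor_def)
  then show ?thesis
    unfolding degree_factor_def using finite_monic_irred_degree by (subst prod_zero_iff) auto
qed

lemma prodinf_eq_0_iff:
  fixes f :: "nat \<Rightarrow> real"
  assumes f: "convergent_prod f"
  shows "prodinf f = 0 \<longleftrightarrow> (\<exists>n. f n = 0)"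
proof
  have lim: "(\<lambda>n. \<Prod>i\<le>n. f i) \<longlonglongrightarrow> prodinf f" by (rule convergent_prod_LIMSEQ[OF f])
  show "\<exists>n. f n = 0" if "prodinf f = 0"
    using lim that convergent_prod_to_zero_iff[OF f] by simp
  show "prodinf f = 0" if "\<exists>n. f n = 0"
  proof -
    have "(\<lambda>n. \<Prod>i\<le>n. f i) \<longlonglongrightarrow> 0" using that convergent_prod_to_zero_iff[OF f] by simp
    with lim show ?thesis by (rule LIMSEQ_unique)
  qed
qed

theorem mainTheorem12:
  fixes h :: "'a::{field,finite} poly list"
  assumes "odd CARD('a)"
    and "distinct h"
  shows "(\<forall>P. monic_irred P \<longrightarrow>
            (local_density h P = 0 \<longleftrightarrow> (\<exists>\<nu>\<ge>1. sq_form_tuple_set h (P ^ \<nu>) = {})))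
       \<and> convergent_prod (degree_factor h)
       \<and> (singular_series h = 0 \<longleftrightarrow>
            (\<exists>P \<nu>. monic_irred P \<and> \<nu> \<ge> 1 \<and> sq_form_tuple_set h (P ^ \<nu>) = {}))"
proof (intro conjI allI impI)
  show local: "local_density h P = 0 \<longleftrightarrow> (\<exists>\<nu>\<ge>1. sq_form_tuple_set h (P ^ \<nu>) = {})"
    if "monic_irred P" for P
    using local_density_eq_0_iff[OF assms(1) that assms(2)] .
  show conv: "convergent_prod (degree_factor h)"
    by (rule convergent_prod_degree_factor[OF assms])
  have "singular_series h = 0 \<longleftrightarrow> (\<exists>n. degree_factor h n = 0)"
    unfolding singular_series_def by (rule prodinf_eq_0_iff[OF conv])
  also have "\<dots> \<longleftrightarrow> (\<exists>P. monic_irred P \<and> local_density h P = 0)"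
    using degree_factor_eq_0_iff[OF assms(1)] by blast
  also have "\<dots> \<longleftrightarrow> (\<exists>P \<nu>. monic_irred P \<and> \<nu> \<ge> 1 \<and> sq_form_tuple_set h (P ^ \<nu>) = {})"
    using local by blast
  finally show "singular_series h = 0 \<longleftrightarrow>
      (\<exists>P \<nu>. monic_irred P \<and> \<nu> \<ge> 1 \<and> sq_form_tuple_set h (P ^ \<nu>) = {})" .
qed

end
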